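(* Let $\mathbf d\in\mathbb Z^n$ with $m=d_1+\dots+d_n$ and $\gcd(m,n)=1$. Then $y^{\mathbf d}s_1\cdots s_{n-1}$ is conjugate in $\widetilde{S_n}$ to $\pi^m$, and $\pi^m$ is an element of minimal length in this conjugacy class.
   Context: $\widetilde{S_n}$ is identified with the group of bijections $v:\mathbb Z\to\mathbb Z$ with $v(m+n)=v(m)+n$; $s_i$ ($i\in\mathbb Z/n$) swaps $i$ and $i+1$ (periodically extended), $\pi(m)=m+1$, $y_i(m)=m+n$ if $m\equiv i\bmod n$ and $y_i(m)=m$ otherwise ($1\le i\le n$); $y^{\mathbf d}=y_1^{d_1}\cdots y_n^{d_n}$. $\widehat{S_n}$ is the Coxeter group generated by $s_0,\dots,s_{n-1}$; every $v\in\widetilde{S_n}$ is uniquely $\pi^k\alpha$ with $\alpha\in\widehat{S_n}$, and the length is $\ell(v):=\ell(\alpha)$ (Coxeter length), so $\ell(\pi^k)=0$. *)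

theory Defs
  imports Main
begin

text \<open>Extended affine symmetric group: bijections v of the integers with v(m+n) = v(m)+n.
  Group product is composition of functions.\<close>
definition ext_aff :: "nat \<Rightarrow> (int \<Rightarrow> int) set" where
  "ext_aff n = {v. bij v \<and> (\<forall>m. v (m + int n) = v m + int n)}"

definition s_refl :: "nat \<Rightarrow> int \<Rightarrow> int \<Rightarrow> int" where
  "s_refl n i m = (if m mod int n = i mod int n then m + 1
                   else if m mod int n = (i + 1) mod int n then m - 1 else m)"

definition pi_shift :: "int \<Rightarrow> int" where
  "pi_shift m = m + 1"

definition y_gen :: "nat \<Rightarrow> nat \<Rightarrow> int \<Rightarrow> int" where
  "y_gen n i m = (if m mod int n = int i mod int n then m + int n else m)"

definition fpow :: "('a \<Rightarrow> 'a) \<Rightarrow> int \<Rightarrow> 'a \<Rightarrow> 'a" where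
  "fpow f k = (if 0 \<le> k then f ^^ nat k else (inv f) ^^ nat (- k))"

definition comp_list :: "('a \<Rightarrow> 'a) list \<Rightarrow> 'a \<Rightarrow> 'a" where
  "comp_list fs = foldr (\<circ>) fs id"

definition y_pow :: "nat \<Rightarrow> (nat \<Rightarrow> int) \<Rightarrow> int \<Rightarrow> int" where
  "y_pow n d = comp_list (map (\<lambda>i. fpow (y_gen n i) (d i)) [1..<n+1])"

text \<open>Length: l(pi^k alpha) = Coxeter length of alpha, i.e. the least number of simple
  reflections s_0..s_{n-1} needed to write alpha (the decomposition v = pi^k alpha is unique).\<close>
definition aff_length :: "nat \<Rightarrow> (int \<Rightarrow> int) \<Rightarrow> nat" where
  "aff_length n v = (LEAST k. \<exists>j is. length is = k \<and> set is \<subseteq> {0..<int n} \<and>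
       v = fpow pi_shift j \<circ> comp_list (map (s_refl n) is))"

definition conj_in :: "nat \<Rightarrow> (int \<Rightarrow> int) \<Rightarrow> (int \<Rightarrow> int) \<Rightarrow> bool" where
  "conj_in n v w = (\<exists>g \<in> ext_aff n. v = g \<circ> w \<circ> inv g)"

end

(*
  Put w = y^d s_1 ... s_(n-1). Both factors commute with x \<mapsto> x + n, and on the orbit of 0
  the Coxeter word adds 1 (wrapping the residue n-1 around to 0) while y^d then adds n d_(k+1):
  hence w^k(0) = k + n (d_1 + ... + d_k - 1). So the orbit of 0 runs through the residues
  0, 1, ..., n-1 in order and then lands on n m. When gcd(m, n) = 1 every integer is uniquely
  k m + l n with 0 \<le> k < n, and k m + l n \<mapsto> w^k(0) + l n is an n-periodic bijection
  conjugating the translation x \<mapsto> x + m, i.e. \<pi>^m, to w.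
  Minimality is immediate, because \<pi>^m has length 0.
*)

theory Submission
  imports Defs
begin

lemma shift_periodic_multiple:
  fixes f :: "int \<Rightarrow> int"
  assumes periodic: "\<And>x. f (x + N) = f x + N"
  shows "f (x + l * N) = f x + l * N"
proof -
  have nonneg: "f (y + int j * N) = f y + int j * N" for y j
  proof (induction j)
    case (Suc j)
    have "f (y + int (Suc j) * N) = f ((y + int j * N) + N)" by (simp add: algebra_simps)
    then show ?case using Suc periodic[of "y + int j * N"] by (simp add: algebra_simps)
  qed simp
  show ?thesis
  proof (cases "0 \<le> l")
    case True
    then show ?thesis using nonneg[of x "nat l"] by simp
  next
    case False
    have "f x = f ((x + l * N) + int (nat (- l)) * N)" using False by (simp add: algebra_simps)
    then show ?thesis using False nonneg[of "x + l * N" "nat (- l)"] by (simp add: algebra_simps)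
  qed
qed

lemma bij_betw_residue_system:
  fixes N :: int and f :: "int \<Rightarrow> int"
  assumes N_pos: "0 < N" and residues: "bij_betw (\<lambda>k. f k mod N) {0..<N} {0..<N}"
  shows "bij_betw (\<lambda>(k, l). f k + l * N) ({0..<N} \<times> UNIV) UNIV"
  unfolding bij_betw_def
proof
  show "inj_on (\<lambda>(k, l). f k + l * N) ({0..<N} \<times> UNIV)"
  proof (rule inj_onI, clarify)
    fix k l k' l' assume k: "k \<in> {0..<N}" "k' \<in> {0..<N}" and eq: "f k + l * N = f k' + l' * N"
    then have "(f k + l * N) mod N = (f k' + l' * N) mod N" by simp
    then have "f k mod N = f k' mod N" by simp
    then have "k = k'" by (rule inj_onD[OF bij_betw_imp_inj_on[OF residues] _ k])
    then show "k = k' \<and> l = l'" using eq N_pos by simp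
  qed
  show "(\<lambda>(k, l). f k + l * N) ` ({0..<N} \<times> UNIV) = UNIV"
  proof (intro set_eqI iffI)
    fix z :: int
    have "z mod N \<in> (\<lambda>k. f k mod N) ` {0..<N}"
      using N_pos bij_betw_imp_surj_on[OF residues] by simp
    then obtain k where k: "k \<in> {0..<N}" "z mod N = f k mod N" by blast
    then have "N dvd z - f k" by (simp only: mod_eq_dvd_iff)
    then have "z = f k + ((z - f k) div N) * N" by simp
    with k show "z \<in> (\<lambda>(k, l). f k + l * N) ` ({0..<N} \<times> UNIV)" by force
  qed simp
qed

lemma bij_betw_mult_mod:
  fixes m N :: int
  assumes N_pos: "0 < N" and "coprime m N"
  shows "bij_betw (\<lambda>k. k * m mod N) {0..<N} {0..<N}"
proof -
  have "inj_on (\<lambda>k. k * m mod N) {0..<N}"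
  proof (rule inj_onI)
    fix k k' assume k: "k \<in> {0..<N}" "k' \<in> {0..<N}" and "k * m mod N = k' * m mod N"
    then have "N dvd (k - k') * m" by (simp add: mod_eq_dvd_iff left_diff_distrib)
    then have "N dvd k - k'" using \<open>coprime m N\<close> by (simp add: coprime_commute coprime_dvd_mult_left_iff)
    then show "k = k'" using k dvd_imp_le_int[of "k - k'" N] by (cases "k = k'") auto
  qed
  moreover have "(\<lambda>k. k * m mod N) ` {0..<N} \<subseteq> {0..<N}" using N_pos by auto
  ultimately show ?thesis by (simp add: bij_betw_def endo_inj_surj)
qed

lemma conj_in_if_intertwines:
  assumes "g \<in> ext_aff n" and intertwines: "\<And>x. g (x + m) = w (g x)"
  shows "conj_in n w (\<lambda>x. x + m)"
proof -
  have "bij g" using assms(1) by (simp add: ext_aff_def)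
  then have "w z = g (inv g z + m)" for z
    using intertwines[of "inv g z"] by (simp add: bij_is_surj surj_f_inv_f)
  then show ?thesis using assms(1) unfolding conj_in_def by force
qed

lemma conj_in_translation_if_orbit:
  fixes w :: "int \<Rightarrow> int" and m :: int
  assumes n_pos: "0 < n"
    and w_periodic: "\<And>x. w (x + int n) = w x + int n"
    and orbit_residue: "\<And>k. k < n \<Longrightarrow> (w ^^ k) 0 mod int n = int k"
    and orbit_return: "(w ^^ n) 0 = int n * m"
    and coprime: "coprime m (int n)"
  shows "conj_in n w (\<lambda>x. x + m)"
proof -
  define N where "N = int n"
  define A where "A = {0..<N} \<times> (UNIV :: int set)"
  define Phi where "Phi = (\<lambda>(k, l). k * m + l * N)"
  define Psi where "Psi = (\<lambda>(k, l). (w ^^ nat k) 0 + l * N)"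
  have N_pos: "0 < N" using n_pos N_def by simp
  have "bij_betw (\<lambda>k. k * m mod N) {0..<N} {0..<N}"
    using N_pos coprime by (simp add: N_def bij_betw_mult_mod)
  then have Phi: "bij_betw Phi A UNIV"
    unfolding Phi_def A_def by (rule bij_betw_residue_system[OF N_pos])
  have "bij_betw (\<lambda>k. (w ^^ nat k) 0 mod N) {0..<N} {0..<N}"
  proof (subst bij_betw_cong)
    show "(w ^^ nat k) 0 mod N = id k" if "k \<in> {0..<N}" for k
      using that orbit_residue[of "nat k"] N_def by (simp add: nat_less_iff)
  qed (simp add: bij_betw_id[unfolded id_def])
  then have Psi: "bij_betw Psi A UNIV"
    unfolding Psi_def A_def by (rule bij_betw_residue_system[OF N_pos])
  define g where "g = Psi \<circ> inv_into A Phi"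
  have g_Phi: "g (Phi p) = Psi p" if "p \<in> A" for p
    using that Phi by (simp add: g_def bij_betw_imp_inj_on)
  have Phi_onto: "\<exists>k l. 0 \<le> k \<and> k < N \<and> x = k * m + l * N" for x
    using bij_betw_imp_surj_on[OF Phi] unfolding Phi_def A_def by (force simp: image_iff)
  have "g \<in> ext_aff n"
  proof -
    have "g (x + N) = g x + N" for x
    proof -
      obtain k l where "0 \<le> k" "k < N" "x = k * m + l * N" using Phi_onto by blast
      then show ?thesis using g_Phi[of "(k, l)"] g_Phi[of "(k, l + 1)"]
        by (simp add: A_def Phi_def Psi_def algebra_simps)
    qed
    moreover have "bij g" using bij_betw_trans[OF bij_betw_inv_into[OF Phi] Psi] by (simp add: g_def)
    ultimately show ?thesis by (simp add: ext_aff_def N_def)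
  qed
  moreover have "g (x + m) = w (g x)" for x
  proof -
    obtain k l where k: "0 \<le> k" "k < N" and x: "x = k * m + l * N" using Phi_onto by blast
    have gx: "g x = (w ^^ nat k) 0 + l * N" using g_Phi[of "(k, l)"] k x by (simp add: A_def Phi_def Psi_def)
    have w_gx: "w (g x) = (w ^^ Suc (nat k)) 0 + l * N"
      using shift_periodic_multiple[of w N] w_periodic by (simp add: gx N_def)
    show ?thesis
    proof (cases "k + 1 < N")
      case True
      then have "g (x + m) = (w ^^ nat (k + 1)) 0 + l * N"
        using g_Phi[of "(k + 1, l)"] k x by (simp add: A_def Phi_def Psi_def algebra_simps)
      then show ?thesis using w_gx k by (simp add: Suc_nat_eq_nat_zadd1 add.commute)
    next
      case False
      then have k_last: "k + 1 = N" "Suc (nat k) = n" using k N_def by simp_all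
      have "x + m = (k + 1) * m + l * N" using x by (simp add: algebra_simps)
      then have "x + m = 0 * m + (l + m) * N" unfolding k_last(1) by (simp add: algebra_simps)
      then have "g (x + m) = (l + m) * N"
        using g_Phi[of "(0, l + m)"] N_pos by (simp add: A_def Phi_def Psi_def)
      then show ?thesis using w_gx k_last orbit_return N_def by (simp add: algebra_simps)
    qed
  qed
  ultimately show ?thesis by (rule conj_in_if_intertwines)
qed

lemma funpow_translate_on:
  fixes P :: "int \<Rightarrow> bool"
  assumes invariant: "\<And>x. P (x + a) = P x"
  shows "(\<lambda>x. if P x then x + a else x) ^^ j = (\<lambda>x. if P x then x + int j * a else x)"
  by (induction j) (auto simp: fun_eq_iff funpow_Suc_right invariant algebra_simps simp del: funpow.simps)

lemma fpow_translate_on: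
  fixes P :: "int \<Rightarrow> bool"
  assumes invariant: "\<And>x. P (x + a) = P x"
  shows "fpow (\<lambda>x. if P x then x + a else x) k = (\<lambda>x. if P x then x + k * a else x)"
proof (cases "0 \<le> k")
  case True
  then obtain j where "k = int j" by (metis nonneg_eq_int)
  moreover have "(\<lambda>x. if P x then x + a else x) ^^ j = (\<lambda>x. if P x then x + int j * a else x)"
    using invariant by (rule funpow_translate_on)
  ultimately show ?thesis by (simp add: fpow_def fun_eq_iff)
next
  case False
  have invariant': "P (x + - a) = P x" for x using invariant[of "x - a"] by simp
  have "inv (\<lambda>x. if P x then x + a else x) = (\<lambda>x. if P x then x + - a else x)"
    by (rule inv_unique_comp) (auto simp: fun_eq_iff invariant invariant'[simplified])
  then have "fpow (\<lambda>x. if P x then x + a else x) k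
      = (\<lambda>x. if P x then x + - a else x) ^^ nat (- k)"
    using False by (simp add: fpow_def)
  also have "\<dots> = (\<lambda>x. if P x then x + int (nat (- k)) * - a else x)"
    using invariant' by (rule funpow_translate_on)
  also have "\<dots> = (\<lambda>x. if P x then x + k * a else x)"
    using False by (simp add: fun_eq_iff)
  finally show ?thesis .
qed

lemma fpow_pi_shift: "fpow pi_shift k = (\<lambda>x. x + k)"
  using fpow_translate_on[of "\<lambda>_. True" 1 k] by (simp add: pi_shift_def[abs_def])

lemma fpow_y_gen:
  "fpow (y_gen n i) k = (\<lambda>x. if x mod int n = int i mod int n then x + k * int n else x)"
  using fpow_translate_on[of "\<lambda>x. x mod int n = int i mod int n" "int n" k]
  by (simp add: y_gen_def[abs_def])

lemma comp_list_snoc: "comp_list (fs @ [f]) x = comp_list fs (f x)"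
  by (induction fs) (simp_all add: comp_list_def)

lemma y_pow_prefix_apply:
  "comp_list (map (\<lambda>i. fpow (y_gen n i) (d i)) [1..<k + 1]) x
     = x + int n * (\<Sum>j = 1..k. if x mod int n = int j mod int n then d j else 0)"
proof (induction k arbitrary: x)
  case (Suc k)
  have "[1..<Suc k + 1] = [1..<k + 1] @ [Suc k]" by simp
  then have "comp_list (map (\<lambda>i. fpow (y_gen n i) (d i)) [1..<Suc k + 1]) x
      = comp_list (map (\<lambda>i. fpow (y_gen n i) (d i)) [1..<k + 1])
          (x + int n * (if x mod int n = int (Suc k) mod int n then d (Suc k) else 0))"
    by (simp only: map_append list.map comp_list_snoc) (simp add: fpow_y_gen mult.commute)
  then show ?case using Suc.IH by (simp add: algebra_simps)
qed (simp add: comp_list_def)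

lemma y_pow_apply:
  assumes "1 \<le> j" "j \<le> n" and "x mod int n = int j mod int n"
  shows "y_pow n d x = x + int n * d j"
proof -
  have "x mod int n = int i mod int n \<longleftrightarrow> i = j" if "i \<in> {1..n}" for i
    using that assms by (auto simp: zmod_int[symmetric] mod_if)
  then have "(\<Sum>i = 1..n. if x mod int n = int i mod int n then d i else 0)
      = (\<Sum>i = 1..n. if i = j then d i else 0)"
    by (intro sum.cong) auto
  then show ?thesis using assms unfolding y_pow_def y_pow_prefix_apply by simp
qed

lemma y_pow_periodic: "y_pow n d (x + int n) = y_pow n d x + int n"
  unfolding y_pow_def y_pow_prefix_apply by simp

lemma mod_succ_eq:
  fixes k N :: int
  assumes "0 \<le> k" "k < N"
  shows "(k + 1) mod N = (if k + 1 < N then k + 1 else 0)"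
proof (cases "k + 1 < N")
  case False
  then have "k + 1 = N" using assms by simp
  then show ?thesis by simp
qed (use assms in simp)

lemma mod_pred_eq:
  fixes x k N :: int
  assumes "x mod N = (k + 1) mod N" "0 \<le> k" "k < N"
  shows "(x - 1) mod N = k"
proof -
  have "(x - 1) mod N = ((k + 1) mod N - 1) mod N" using assms(1) by (metis mod_diff_left_eq)
  also have "\<dots> = k" using assms(2,3) by (simp add: mod_diff_left_eq)
  finally show ?thesis .
qed

definition coxeter_word :: "nat \<Rightarrow> int \<Rightarrow> int" where
  "coxeter_word n = comp_list (map (\<lambda>i. s_refl n (int i)) [1..<n])"

lemma s_refl_prefix_apply:
  assumes k: "1 \<le> k" "k \<le> n"
  shows "comp_list (map (\<lambda>i. s_refl n (int i)) [1..<k]) x =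
    (if 1 \<le> x mod int n \<and> x mod int n < int k then x + 1
     else if x mod int n = int k mod int n then x - (int k - 1) else x)"
  using k
proof (induction k arbitrary: x rule: nat_induct_at_least)
  case base
  then show ?case by (simp add: comp_list_def)
next
  case (Suc k)
  note IH = Suc.IH[OF Suc_leD[OF Suc.prems]]
  define N where "N = int n"
  define R where "R = x mod N"
  have k_lt: "int k < N" and k_mod: "int k mod N = int k" using Suc N_def by simp_all
  have succ_mod: "(int k + 1) mod N = (if int k + 1 < N then int k + 1 else 0)"
    using k_lt by (simp add: mod_succ_eq)
  have "[1..<Suc k] = [1..<k] @ [k]" using Suc by simp
  then have prefix: "comp_list (map (\<lambda>i. s_refl n (int i)) [1..<Suc k]) x
      = comp_list (map (\<lambda>i. s_refl n (int i)) [1..<k]) (s_refl n (int k) x)"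
    by (simp only: map_append list.map comp_list_snoc)
  consider "R = int k" | "R = (int k + 1) mod N" | "R \<noteq> int k" "R \<noteq> (int k + 1) mod N" by blast
  then show ?case
  proof cases
    case 1
    then have "s_refl n (int k) x = x + 1" using k_mod by (simp add: s_refl_def N_def R_def)
    moreover have "(x + 1) mod N = (int k + 1) mod N" using 1 by (metis R_def mod_add_left_eq)
    ultimately show ?thesis using prefix IH 1 succ_mod k_lt Suc.hyps by (simp add: N_def R_def)
  next
    case 2
    moreover have "R \<noteq> int k" using 2 succ_mod Suc.hyps by auto
    ultimately have "s_refl n (int k) x = x - 1" using k_mod by (simp add: s_refl_def N_def R_def)
    moreover have "(x - 1) mod N = int k" using 2 k_lt by (simp add: R_def mod_pred_eq)
    ultimately have "comp_list (map (\<lambda>i. s_refl n (int i)) [1..<Suc k]) x = x - int k"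
      using prefix IH k_lt by (simp add: N_def)
    moreover have "\<not> (1 \<le> R \<and> R < int k + 1)" using 2 succ_mod by auto
    ultimately show ?thesis using 2 by (simp add: N_def R_def ac_simps)
  next
    case 3
    then have "s_refl n (int k) x = x" using k_mod by (simp add: s_refl_def N_def R_def)
    then have "comp_list (map (\<lambda>i. s_refl n (int i)) [1..<Suc k]) x
        = (if 1 \<le> R \<and> R < int k then x + 1 else x)"
      using prefix IH[of x] 3 k_mod by (simp add: N_def R_def)
    then show ?thesis using 3 by (auto simp: N_def R_def ac_simps)
  qed
qed

lemma coxeter_word_apply:
  assumes "0 < n"
  shows "coxeter_word n x = (if x mod int n = 0 then x + 1 - int n else x + 1)"
proof -
  have "0 \<le> x mod int n" "x mod int n < int n" using assms by simp_all
  then consider "x mod int n = 0" | "1 \<le> x mod int n" by linarith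
  then show ?thesis using s_refl_prefix_apply[of n n x] assms
    by cases (auto simp: coxeter_word_def)
qed

lemma coxeter_word_periodic:
  assumes "0 < n"
  shows "coxeter_word n (x + int n) = coxeter_word n x + int n"
  using assms by (simp add: coxeter_word_apply)

lemma y_pow_coxeter_apply:
  assumes n: "0 < n" and k: "k < n" and x: "x mod int n = int k"
  shows "y_pow n d (coxeter_word n x) = x + 1 - (if k = 0 then int n else 0) + int n * d (Suc k)"
proof -
  have cox: "coxeter_word n x = x + 1 - (if k = 0 then int n else 0)"
    using x n by (simp add: coxeter_word_apply)
  have "coxeter_word n x mod int n = (x + 1) mod int n"
    unfolding cox by (simp add: mod_diff_right_eq[symmetric])
  also have "\<dots> = int (Suc k) mod int n" using x by (metis mod_add_left_eq of_nat_Suc add.commute)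
  finally show ?thesis using y_pow_apply[of "Suc k" n] k cox by simp
qed

lemma y_pow_coxeter_orbit:
  assumes n: "0 < n" and k: "1 \<le> k" "k \<le> n"
  shows "((y_pow n d \<circ> coxeter_word n) ^^ k) 0 = int k + int n * ((\<Sum>j = 1..k. d j) - 1)"
proof -
  define w where "w = y_pow n d \<circ> coxeter_word n"
  have "(w ^^ k) 0 = int k + int n * ((\<Sum>j = 1..k. d j) - 1)"
    using k
  proof (induction k rule: nat_induct_at_least)
    case base
    show ?case using y_pow_coxeter_apply[OF n, of 0 0 d] n by (simp add: w_def algebra_simps)
  next
    case (Suc k)
    note IH = Suc.IH[OF Suc_leD[OF Suc.prems]]
    have "(w ^^ k) 0 mod int n = int k" unfolding IH using Suc.prems by simp
    then have "(w ^^ Suc k) 0 = (w ^^ k) 0 + 1 + int n * d (Suc k)"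
      using y_pow_coxeter_apply[OF n, of k "(w ^^ k) 0" d] Suc by (simp add: w_def)
    then show ?case unfolding IH using Suc.hyps by (simp add: algebra_simps)
  qed
  then show ?thesis by (simp add: w_def)
qed

lemma aff_length_fpow_pi_shift: "aff_length n (fpow pi_shift j) = 0"
  unfolding aff_length_def
  by (rule Least_eq_0) (rule exI[of _ j], rule exI[of _ "[]"], simp add: comp_list_def)

theorem corollary3p4:
  fixes n :: nat and d :: "nat \<Rightarrow> int" and m :: int
  assumes "n \<ge> 2"
    and "m = (\<Sum>i=1..n. d i)"
    and "gcd m (int n) = 1"
  shows "conj_in n (y_pow n d \<circ> comp_list (map (\<lambda>i. s_refl n (int i)) [1..<n]))
                   (fpow pi_shift m)
       \<and> (\<forall>u \<in> ext_aff n. conj_in n u (fpow pi_shift m) \<longrightarrow>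
              aff_length n (fpow pi_shift m) \<le> aff_length n u)"
proof
  have n_pos: "0 < n" using assms(1) by simp
  have "conj_in n (y_pow n d \<circ> coxeter_word n) (\<lambda>x. x + m)"
  proof (rule conj_in_translation_if_orbit)
    show "(y_pow n d \<circ> coxeter_word n) (x + int n) = (y_pow n d \<circ> coxeter_word n) x + int n" for x
      using n_pos by (simp add: coxeter_word_periodic y_pow_periodic)
    show "coprime m (int n)" using assms(3) by (simp add: coprime_iff_gcd_eq_1)
    show "((y_pow n d \<circ> coxeter_word n) ^^ k) 0 mod int n = int k" if "k < n" for k
      using that y_pow_coxeter_orbit[OF n_pos, of k d] by (cases "k = 0") simp_all
    show "((y_pow n d \<circ> coxeter_word n) ^^ n) 0 = int n * m"
      using y_pow_coxeter_orbit[OF n_pos, of n d] assms by (simp add: algebra_simps)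
  qed (fact n_pos)
  then show "conj_in n (y_pow n d \<circ> comp_list (map (\<lambda>i. s_refl n (int i)) [1..<n])) (fpow pi_shift m)"
    by (simp add: coxeter_word_def fpow_pi_shift)
qed (simp add: aff_length_fpow_pi_shift)

end
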